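(* Let $\mathcal{M}=(a_1^*,\dots,a_L^* )$ be a route with $a_1^*=1$ in which, for each $1\le k<L$, node $a_{k+1}^*$ is a nearest neighbor with respect to $(a_1^*,\dots,a_k^* )$. Let $K\ge1$ and let $b_1,\dots,b_K$ be distinct nodes not in $\mathcal{M}$, where $b_1$ is not a nearest neighbor with respect to $\mathcal{M}$. Let $\mathcal{M}_1=(a_1^*,\dots,a_L^*,b_1,\dots,b_K)$. Assume a nearest neighbor $a_{L+1}^*$ with respect to $\mathcal{M}$ exists. Define $\mathcal{M}_2$ as follows: - if $a_{L+1}^*\notin\{b_1,\dots,b_{K-1}\}$, then $\mathcal{M}_2=(a_1^*,\dots,a_L^*,a_{L+1}^*,b_1,\dots,b_{K-1})$; - if $a_{L+1}^*=b_k$ for some $k\in\{1,\dots,K-1\}$, then $\mathcal{M}_2=(a_1^*,\dots,a_L^*,a_{L+1}^*,b_1,\dots,b_{k-1},b_{k+1},\dots,b_K)$. Then $R_{\mathrm{DF}}(\mathcal{M}_2)\ge R_{\mathrm{DF}}(\mathcal{M}_1)$.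
   Context: Network: a finite set of nodes $\mathcal{S}=\{1,2,\dots,D\}$, $D\ge 2$. Node $1$ is the source and node $D$ is the destination. Received powers: for distinct nodes $i,t$, the power received at $t$ from $i$ is a positive real number $P_{it}$. All receivers have the same noise power $N>0$. Routes: a route is an ordered tuple of distinct nodes $\mathcal{M}=(m_1,\dots,m_L)$ with $m_1=1$ and $L\ge1$. DF with independent codewords: the reception rate of node $m_t$ ($2\le t\le L$) in route $\mathcal{M}$ is $$R_{m_t}(\mathcal{M})=\tfrac12\log\Big(1+N^{-1}\sum_{i=1}^{t-1}P_{m_i m_t}\Big).$$ The supported DF rate (for $L\ge2$) is $R_{\mathrm{DF}}(\mathcal{M})=\min_{2\le t\le L}R_{m_t}(\mathcal{M})$. Nearest neighbor: node $i\notin\mathcal{M}$ is a nearest neighbor with respect to route $\mathcal{M}$ iff $P_{mi}\ge P_{mj}$ for all $m\in\mathcal{M}$ and all $j\in\mathcal{S}\setminus(\mathcal{M}\cup\{i\})$. *)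

theory Defs
  imports "HOL-Analysis.Analysis"
begin

(* Nodes are natural numbers in S = {1..D}; node 1 is the source.
   A route is a list of distinct nodes starting with 1.
   P i t : received power at t from i; N : noise power. *)

definition is_route :: "nat \<Rightarrow> nat list \<Rightarrow> bool" where
  "is_route D M \<longleftrightarrow> M \<noteq> [] \<and> hd M = 1 \<and> distinct M \<and> set M \<subseteq> {1..D}"

(* reception rate of the t-th node (1-based, 2 <= t <= length M) of route M *)
definition rec_rate :: "(nat \<Rightarrow> nat \<Rightarrow> real) \<Rightarrow> real \<Rightarrow> nat list \<Rightarrow> nat \<Rightarrow> real" where
  "rec_rate P N M t = (1/2) * log 2 (1 + (1/N) * (\<Sum>i=1..t-1. P (M ! (i-1)) (M ! (t-1))))"

(* DF rate, meaningful for routes of length >= 2 *)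
definition R_DF :: "(nat \<Rightarrow> nat \<Rightarrow> real) \<Rightarrow> real \<Rightarrow> nat list \<Rightarrow> real" where
  "R_DF P N M = Min ((\<lambda>t. rec_rate P N M t) ` {2..length M})"

definition nearest_neighbor :: "nat \<Rightarrow> (nat \<Rightarrow> nat \<Rightarrow> real) \<Rightarrow> nat list \<Rightarrow> nat \<Rightarrow> bool" where
  "nearest_neighbor D P M i \<longleftrightarrow> i \<in> {1..D} \<and> i \<notin> set M \<and>
     (\<forall>m\<in>set M. \<forall>j\<in>{1..D} - (set M \<union> {i}). P m i \<ge> P m j)"

end

theory Submission
  imports Defs
begin

(* In a route without repeated nodes, the reception rate of a node y depends
   only on the total power y receives from the nodes that precede it, so the DF rate of a
   route M is the minimum, over the nodes y in the tail of M, of the monotone function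
   snr_rate N applied to the power received by y in M.  Hence R_DF M1 \<le> R_DF M2 follows
   once every node of the tail of M2 is dominated by a node of the tail of M1 that receives
   no more power in M1.  For M1 = A @ bs and M2 = A @ a # R this domination is checked node
   by node: nodes of A have the same predecessors in both routes; the nearest neighbour a
   receives at least as much from A as b1 does; and every node y of R keeps (up to the
   new node a) all of its predecessors from bs, because R is obtained from bs either by
   dropping its last element or by removing a.

   The argument only uses
   that a is a nearest neighbour of A. *)

definition snr_rate :: "real \<Rightarrow> real \<Rightarrow> real" where
  "snr_rate N u = 1/2 * log 2 (1 + (1/N) * u)"

definition received :: "(nat \<Rightarrow> nat \<Rightarrow> real) \<Rightarrow> nat list \<Rightarrow> nat \<Rightarrow> real" where
  "received P M y = (\<Sum>x\<in>set (takeWhile (\<lambda>x. x \<noteq> y) M). P x y)"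

lemma snr_rate_mono:
  assumes "N > 0" "0 \<le> u" "u \<le> v"
  shows "snr_rate N u \<le> snr_rate N v"
proof -
  have "0 \<le> 1/N * u" and "1/N * u \<le> 1/N * v"
    using assms by (simp_all add: divide_right_mono)
  then show ?thesis
    unfolding snr_rate_def by simp
qed

lemma take_eq_takeWhile_nth:
  assumes "distinct xs" "i < length xs"
  shows "takeWhile (\<lambda>x. x \<noteq> xs ! i) xs = take i xs"
  by (rule takeWhile_eq_take_P_nth) (use assms in \<open>auto simp: nth_eq_iff_index_eq\<close>)

lemma rec_rate_received:
  assumes "distinct M" "0 < t" "t \<le> length M"
  shows "rec_rate P N M t = snr_rate N (received P M (M ! (t-1)))"
proof -
  let ?y = "M ! (t-1)"
  have "(\<Sum>i=1..t-1. P (M ! (i-1)) ?y) = (\<Sum>i<t-1. P (M ! i) ?y)"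
    by (simp add: sum.atLeast1_atMost_eq)
  also have "\<dots> = sum_list (map (\<lambda>x. P x ?y) (take (t-1) M))"
    using assms by (simp add: sum_list_sum_nth atLeast0LessThan)
  also have "\<dots> = (\<Sum>x\<in>set (take (t-1) M). P x ?y)"
    using assms by (simp add: sum_list_distinct_conv_sum_set)
  also have "\<dots> = received P M ?y"
    unfolding received_def using assms by (simp add: take_eq_takeWhile_nth)
  finally show ?thesis
    unfolding rec_rate_def snr_rate_def by simp
qed

lemma nth_pred_image_tl: "(\<lambda>t. M ! (t-1)) ` {2..length M} = set (tl M)"
proof (intro set_eqI iffI)
  fix y assume "y \<in> (\<lambda>t. M ! (t-1)) ` {2..length M}"
  then obtain t where "2 \<le> t" "t \<le> length M" "y = M ! (t-1)" by auto
  then show "y \<in> set (tl M)"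
    by (auto simp: in_set_conv_nth nth_tl intro!: exI[of _ "t-2"] arg_cong[where f="(!) M"])
next
  fix y assume "y \<in> set (tl M)"
  then obtain j where "j < length M - 1" "y = M ! Suc j"
    by (auto simp: in_set_conv_nth nth_tl)
  then show "y \<in> (\<lambda>t. M ! (t-1)) ` {2..length M}"
    by (auto intro!: image_eqI[of _ _ "j+2"])
qed

lemma R_DF_received:
  assumes "distinct M"
  shows "R_DF P N M = Min ((\<lambda>y. snr_rate N (received P M y)) ` set (tl M))"
proof -
  have "(\<lambda>t. rec_rate P N M t) ` {2..length M}
        = (\<lambda>t. snr_rate N (received P M (M ! (t-1)))) ` {2..length M}"
    using assms by (intro image_cong) (simp_all add: rec_rate_received)
  also have "\<dots> = (\<lambda>y. snr_rate N (received P M y)) ` ((\<lambda>t. M ! (t-1)) ` {2..length M})"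
    by (simp add: image_image)
  finally have "(\<lambda>t. rec_rate P N M t) ` {2..length M}
        = (\<lambda>y. snr_rate N (received P M y)) ` set (tl M)"
    unfolding nth_pred_image_tl .
  then show ?thesis
    unfolding R_DF_def by simp
qed

lemma Min_le_Min_dominated:
  fixes A B :: "'a::linorder set"
  assumes "finite A" "finite B" "B \<noteq> {}" "\<And>b. b \<in> B \<Longrightarrow> \<exists>a\<in>A. a \<le> b"
  shows "Min A \<le> Min B"
proof -
  obtain a where "a \<in> A" "a \<le> Min B"
    using assms(2-4) Min_in by blast
  then show ?thesis
    using assms(1) by (meson Min_le order_trans)
qed

lemma R_DF_le_dominated:
  assumes "N > 0" "distinct M1" "distinct M2" "tl M2 \<noteq> []"
    and dom: "\<And>y. y \<in> set (tl M2) \<Longrightarrow>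
      \<exists>y'\<in>set (tl M1). 0 \<le> received P M1 y' \<and> received P M1 y' \<le> received P M2 y"
  shows "R_DF P N M1 \<le> R_DF P N M2"
  unfolding R_DF_received[OF assms(2)] R_DF_received[OF assms(3)]
proof (rule Min_le_Min_dominated)
  fix r assume "r \<in> (\<lambda>y. snr_rate N (received P M2 y)) ` set (tl M2)"
  then obtain y where "y \<in> set (tl M2)" "r = snr_rate N (received P M2 y)" by blast
  with dom obtain y' where "y' \<in> set (tl M1)"
    "snr_rate N (received P M1 y') \<le> r"
    using snr_rate_mono[OF \<open>N > 0\<close>] by blast
  then show "\<exists>s\<in>(\<lambda>y. snr_rate N (received P M1 y)) ` set (tl M1). s \<le> r"
    by blast
qed (use assms(4) in auto)

lemma received_nonneg:
  assumes "\<And>i t. i \<in> {1..D} \<Longrightarrow> t \<in> {1..D} \<Longrightarrow> i \<noteq> t \<Longrightarrow> P i t > 0"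
    and "set M \<subseteq> {1..D}" "y \<in> {1..D}"
  shows "0 \<le> received P M y"
proof -
  have "0 < P x y" if "x \<in> set (takeWhile (\<lambda>x. x \<noteq> y) M)" for x
    using that assms set_takeWhileD[OF that] by blast
  then show ?thesis
    unfolding received_def by (simp add: sum_nonneg less_imp_le)
qed

lemma received_mono:
  assumes "\<And>i t. i \<in> {1..D} \<Longrightarrow> t \<in> {1..D} \<Longrightarrow> i \<noteq> t \<Longrightarrow> P i t > 0"
    and "set M' \<subseteq> {1..D}" "y \<in> {1..D}"
    and "set (takeWhile (\<lambda>x. x \<noteq> y) M) \<subseteq> set (takeWhile (\<lambda>x. x \<noteq> y) M')"
  shows "received P M y \<le> received P M' y"
proof -
  have "0 < P x y" if "x \<in> set (takeWhile (\<lambda>x. x \<noteq> y) M')" for x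
    using that assms(1-3) set_takeWhileD[OF that] by blast
  then show ?thesis
    unfolding received_def using assms(4) by (intro sum_mono2) (auto simp: less_imp_le)
qed

lemma takeWhile_butlast:
  assumes "y \<in> set (butlast xs)"
  shows "takeWhile (\<lambda>x. x \<noteq> y) (butlast xs) = takeWhile (\<lambda>x. x \<noteq> y) xs"
proof (cases xs rule: rev_cases)
  case (snoc ys z)
  then show ?thesis
    using assms by simp
qed (use assms in simp)

lemma set_takeWhile_remove1:
  assumes "y \<noteq> a"
  shows "set (takeWhile (\<lambda>x. x \<noteq> y) xs) \<subseteq> insert a (set (takeWhile (\<lambda>x. x \<noteq> y) (remove1 a xs)))"
  using assms by (induction xs) auto

lemma shortened_list:
  assumes "distinct bs"
    and R: "R = (if a \<notin> set (butlast bs) then butlast bs else remove1 a bs)"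
  shows "distinct R" "set R \<subseteq> set bs - {a}"
    and "\<And>y. y \<in> set R \<Longrightarrow>
           set (takeWhile (\<lambda>x. x \<noteq> y) bs) \<subseteq> insert a (set (takeWhile (\<lambda>x. x \<noteq> y) R))"
proof -
  show "distinct R" "set R \<subseteq> set bs - {a}"
    using assms by (auto simp: distinct_butlast set_remove1_eq dest: in_set_butlastD)
  then show "set (takeWhile (\<lambda>x. x \<noteq> y) bs) \<subseteq> insert a (set (takeWhile (\<lambda>x. x \<noteq> y) R))"
    if "y \<in> set R" for y
    using that R takeWhile_butlast[of y bs] set_takeWhile_remove1[of y a bs]
    by (auto split: if_splits)
qed

lemma nearest_neighbor_sum_ge:
  assumes "nearest_neighbor D P M a" "b \<in> {1..D}" "b \<notin> set M" "b \<noteq> a"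
  shows "(\<Sum>x\<in>set M. P x b) \<le> (\<Sum>x\<in>set M. P x a)"
  using assms unfolding nearest_neighbor_def by (intro sum_mono) auto

lemma insert_nearest_neighbor_dominated:
  assumes Ppos: "\<And>i t. i \<in> {1..D} \<Longrightarrow> t \<in> {1..D} \<Longrightarrow> i \<noteq> t \<Longrightarrow> P i t > 0"
    and A: "set A \<subseteq> {1..D}" "A \<noteq> []"
    and a: "nearest_neighbor D P A a"
    and bs: "bs \<noteq> []" "set bs \<subseteq> {1..D}" "set bs \<inter> set A = {}" "hd bs \<noteq> a"
    and R: "set R \<subseteq> set bs - {a}"
      "\<And>y. y \<in> set R \<Longrightarrow>
         set (takeWhile (\<lambda>x. x \<noteq> y) bs) \<subseteq> insert a (set (takeWhile (\<lambda>x. x \<noteq> y) R))"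
    and y: "y \<in> set (tl (A @ a # R))"
  shows "\<exists>y'\<in>set (tl (A @ bs)).
           0 \<le> received P (A @ bs) y' \<and> received P (A @ bs) y' \<le> received P (A @ a # R) y"
proof -
  have a_node: "a \<in> {1..D}" and a_new: "a \<notin> set A"
    using a unfolding nearest_neighbor_def by auto
  have M1_nodes: "set (A @ bs) \<subseteq> {1..D}"
    using A bs by auto
  have M2_nodes: "set (A @ a # R) \<subseteq> {1..D}"
    using A bs a_node R by auto
  have tails: "tl (A @ bs) = tl A @ bs" "tl (A @ a # R) = tl A @ a # R"
    using A by simp_all
  consider "y \<in> set (tl A)" | "y = a" | "y \<in> set R"
    using y tails by auto
  then show ?thesis
  proof cases
    case 1
    (* a node of A has the same predecessors in both routes *)
    then have y_A: "y \<in> set A"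
      by (cases A) auto
    have "received P (A @ bs) y = received P (A @ a # R) y"
      unfolding received_def using y_A by simp
    moreover have "0 \<le> received P (A @ bs) y"
      using received_nonneg[where P=P, OF Ppos M1_nodes] y_A A by auto
    ultimately show ?thesis
      using 1 tails by (metis Un_iff order_refl set_append)
  next
    case 2
    (* the first node of bs receives from A no more than the nearest neighbour a *)
    let ?b = "hd bs"
    have b_bs: "?b \<in> set bs"
      using bs(1) by simp
    then have b: "?b \<in> set bs" "?b \<in> {1..D}" "?b \<notin> set A"
      using bs(2,3) by auto
    have "received P (A @ bs) ?b = (\<Sum>x\<in>set A. P x ?b)"
      unfolding received_def using b(3) bs(1) by (cases bs) (auto simp: takeWhile_append)
    also have "\<dots> \<le> (\<Sum>x\<in>set A. P x a)"
      using nearest_neighbor_sum_ge[OF a b(2,3) bs(4)] .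
    also have "\<dots> = received P (A @ a # R) y"
      unfolding received_def using 2 a_new by (auto simp: takeWhile_append)
    finally show ?thesis
      using received_nonneg[where P=P, OF Ppos M1_nodes b(2)] b(1) tails by auto
  next
    case 3
    (* a node of R keeps its predecessors from bs, up to the inserted node a *)
    have y_bs: "y \<in> set bs" and y_ne: "y \<noteq> a"
      and pred: "set (takeWhile (\<lambda>x. x \<noteq> y) bs) \<subseteq> insert a (set (takeWhile (\<lambda>x. x \<noteq> y) R))"
      using R(1) R(2)[OF 3] 3 by auto
    have y_out: "y \<notin> set A" and y_node: "y \<in> {1..D}"
      using y_bs bs by auto
    have "set (takeWhile (\<lambda>x. x \<noteq> y) (A @ bs)) \<subseteq> set (takeWhile (\<lambda>x. x \<noteq> y) (A @ a # R))"
      using pred y_out y_ne by (auto simp: takeWhile_append)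
    then have "received P (A @ bs) y \<le> received P (A @ a # R) y"
      using received_mono[where P=P, OF Ppos M2_nodes y_node] by blast
    then show ?thesis
      using received_nonneg[where P=P, OF Ppos M1_nodes y_node] y_bs tails by auto
  qed
qed

theorem lemma2:
  fixes D :: nat and P :: "nat \<Rightarrow> nat \<Rightarrow> real" and N :: real
    and A :: "nat list" and bs :: "nat list" and a :: nat
  assumes D2: "D \<ge> 2"
    and Ppos: "\<And>i t. i \<in> {1..D} \<Longrightarrow> t \<in> {1..D} \<Longrightarrow> i \<noteq> t \<Longrightarrow> P i t > 0"
    and Npos: "N > 0"
    and Aroute: "is_route D A"
    and Agreedy: "\<And>k. 1 \<le> k \<Longrightarrow> k < length A \<Longrightarrow> nearest_neighbor D P (take k A) (A ! k)"
    and Kpos: "length bs \<ge> 1"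
    and bs_dist: "distinct bs"
    and bs_nodes: "set bs \<subseteq> {1..D}"
    and bs_out: "set bs \<inter> set A = {}"
    and b1_not_nn: "\<not> nearest_neighbor D P A (bs ! 0)"
    and a_nn: "nearest_neighbor D P A a"
  shows "R_DF P N
           (if a \<notin> set (butlast bs) then A @ [a] @ butlast bs
            else A @ [a] @ remove1 a bs)
         \<ge> R_DF P N (A @ bs)"
proof -
  define R where "R = (if a \<notin> set (butlast bs) then butlast bs else remove1 a bs)"
  note R = shortened_list[OF bs_dist R_def]
  have A: "A \<noteq> []" "distinct A" "set A \<subseteq> {1..D}"
    using Aroute unfolding is_route_def by auto
  have a_new: "a \<notin> set A"
    using a_nn unfolding nearest_neighbor_def by auto
  have bs_ne: "bs \<noteq> []"
    using Kpos by auto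
  then have b1_ne_a: "hd bs \<noteq> a"
    using b1_not_nn a_nn by (metis hd_conv_nth)
  have "R_DF P N (A @ bs) \<le> R_DF P N (A @ a # R)"
  proof (rule R_DF_le_dominated[OF Npos])
    show "distinct (A @ bs)" "distinct (A @ a # R)"
      using A(2) bs_dist bs_out a_new R(1,2) by auto
    show "tl (A @ a # R) \<noteq> []"
      using A(1) by simp
  qed (use insert_nearest_neighbor_dominated[where P=P, OF Ppos A(3,1) a_nn bs_ne bs_nodes bs_out
          b1_ne_a R(2,3)] in blast)
  then show ?thesis
    unfolding R_def by (simp split: if_split_asm)
qed

end
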